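(* Let $p>0$ be fixed. Suppose there exists a choice of $x_{\mathrm{home}}\in\mathbb{Z}^2$ such that $\mathbb{E}[T]=\infty$ for any sequence of instructions. Then $\mathbb{E}[T]=\infty$ (for any sequence of instructions) for any choice of $x_{\mathrm{home}}$ other than the origin.
   Context: A sequence of instructions is an infinite walk $(x_t)_{t\ge 0}$ in $\mathbb{Z}^2$ with $x_0=0$ and $x_{t+1}-x_t\in\{(\pm1,0),(0,\pm1)\}$; it may depend on $x_{\mathrm{home}}$. The guided random walk with error probability $p$ following it is the Markov chain $(X_t)_{t\ge0}$ with $X_0=0$ and independent increments, $X_{t+1}-X_t = x_{t+1}-x_t$ with probability $1-p$, and $X_{t+1}-X_t$ uniformly distributed on $\{(\pm1,0),(0,\pm1)\}$ with probability $p$. $T := \inf\{t\ge0 : X_t = x_{\mathrm{home}}\}$. *)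

theory Defs
  imports "HOL-Probability.Probability"
begin

type_synonym pt = "int \<times> int"

definition padd :: "pt \<Rightarrow> pt \<Rightarrow> pt" where
  "padd a b = (fst a + fst b, snd a + snd b)"

definition psub :: "pt \<Rightarrow> pt \<Rightarrow> pt" where
  "psub a b = (fst a - fst b, snd a - snd b)"

definition dirs :: "pt set" where
  "dirs = {(1,0), (-1,0), (0,1), (0,-1)}"

definition instructions :: "(nat \<Rightarrow> pt) \<Rightarrow> bool" where
  "instructions x \<longleftrightarrow> x 0 = (0,0) \<and> (\<forall>t. psub (x (Suc t)) (x t) \<in> dirs)"

definition step_pmf :: "real \<Rightarrow> pt \<Rightarrow> pt pmf" where
  "step_pmf p d = bind_pmf (bernoulli_pmf p)
      (\<lambda>err. if err then pmf_of_set dirs else return_pmf d)"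

text \<open>Law of the sequence of independent increments of the guided walk.\<close>
definition incr_space :: "real \<Rightarrow> (nat \<Rightarrow> pt) \<Rightarrow> (nat \<Rightarrow> pt) measure" where
  "incr_space p x = (\<Pi>\<^sub>M t\<in>UNIV. measure_pmf (step_pmf p (psub (x (Suc t)) (x t))))"

fun walk_pos :: "(nat \<Rightarrow> pt) \<Rightarrow> nat \<Rightarrow> pt" where
  "walk_pos \<omega> 0 = (0,0)"
| "walk_pos \<omega> (Suc t) = padd (walk_pos \<omega> t) (\<omega> t)"

definition hit_time :: "pt \<Rightarrow> (nat \<Rightarrow> pt) \<Rightarrow> ennreal" where
  "hit_time h \<omega> = (if \<exists>t. walk_pos \<omega> t = h
                     then of_nat (LEAST t. walk_pos \<omega> t = h) else \<infinity>)"

definition expected_T :: "real \<Rightarrow> (nat \<Rightarrow> pt) \<Rightarrow> pt \<Rightarrow> ennreal" where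
  "expected_T p x h = (\<integral>\<^sup>+ \<omega>. hit_time h \<omega> \<partial>incr_space p x)"

end

theory Submission
  imports Defs
begin

text \<open>
  Call a home h good (\<open>finite_mean_hit\<close>) if E[T] < \<infinity> for some sequence of
  instructions. Conditioning on the first increment u, which has probability at least p/4 for
  every unit step u, the rest of the walk is a guided walk following the shifted instructions
  t \<mapsto> x (t+1) - x 1, and it must hit h - u; for h \<noteq> 0 this gives T = 1 + T', hence
  E[T'] \<le> 4 E[T] / p. So goodness passes from every nonzero home to all its neighbours, and
  since Z^2 without the origin is connected, either every nonzero home is good or none is.
  The home of the hypothesis is nonzero because T = 0 when the home is the origin.
\<close>

lemma product_prob_spaceI:
  "(\<And>i. prob_space (M i)) \<Longrightarrow> product_prob_space M"
  by (intro product_prob_space.intro product_sigma_finite.intro product_prob_space_axioms.intro)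
     (auto intro: prob_space_imp_sigma_finite)

lemma measurable_case_nat_PiM:
  fixes M :: "nat \<Rightarrow> 'a measure"
  shows "(\<lambda>(s, \<omega>). case_nat s \<omega>) \<in> M 0 \<Otimes>\<^sub>M (\<Pi>\<^sub>M i\<in>UNIV. M (Suc i)) \<rightarrow>\<^sub>M (\<Pi>\<^sub>M i\<in>UNIV. M i)"
proof (rule measurable_PiM_single')
  fix i :: nat
  show "(\<lambda>x. (case x of (s, \<omega>) \<Rightarrow> case_nat s \<omega>) i) \<in> M 0 \<Otimes>\<^sub>M (\<Pi>\<^sub>M i\<in>UNIV. M (Suc i)) \<rightarrow>\<^sub>M M i"
    by (cases i) (auto simp: split_beta')
qed (auto simp: space_pair_measure space_PiM PiE_iff split: nat.split)

text \<open>The library's \<open>PiM_iter\<close> only covers i.i.d. factors.\<close>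

lemma PiM_iter_general:
  fixes M :: "nat \<Rightarrow> 'a measure"
  assumes M: "\<And>i. prob_space (M i)"
  shows "distr (M 0 \<Otimes>\<^sub>M (\<Pi>\<^sub>M i\<in>UNIV. M (Suc i))) (\<Pi>\<^sub>M i\<in>UNIV. M i) (\<lambda>(s, \<omega>). case_nat s \<omega>)
    = (\<Pi>\<^sub>M i\<in>UNIV. M i)"
  (is "?D = _")
proof -
  let ?S' = "\<Pi>\<^sub>M i\<in>UNIV. M (Suc i)" and ?f = "\<lambda>(s, \<omega>). case_nat s \<omega>"
  interpret product_prob_space M UNIV by (intro product_prob_spaceI M)
  interpret S': product_prob_space "\<lambda>i. M (Suc i)" UNIV by (intro product_prob_spaceI M)
  show ?thesis
  proof (rule PiM_eq)
    fix J E assume J: "finite J" "J \<subseteq> UNIV" "\<And>j. j \<in> J \<Longrightarrow> E j \<in> sets (M j)"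
    let ?X = "prod_emb UNIV M J (\<Pi>\<^sub>E j\<in>J. E j)"
    have "\<And>j x. j \<in> J \<Longrightarrow> x \<in> E j \<Longrightarrow> x \<in> space (M j)"
      using J(3)[THEN sets.sets_into_space] by auto
    with J have "?f -` ?X \<inter> space (M 0 \<Otimes>\<^sub>M ?S') = (if 0 \<in> J then E 0 else space (M 0)) \<times>
        prod_emb UNIV (\<lambda>i. M (Suc i)) (Suc -` J) (\<Pi>\<^sub>E j\<in>Suc -` J. E (Suc j))"
      (is "_ = ?E \<times> ?F")
      by (auto simp: space_pair_measure space_PiM PiE_iff prod_emb_def all_conj_distrib
          split: nat.split nat.split_asm)
    then have "emeasure ?D ?X = emeasure (M 0 \<Otimes>\<^sub>M ?S') (?E \<times> ?F)"
      by (subst emeasure_distr) (use measurable_case_nat_PiM in \<open>auto intro!: sets_PiM_I simp: split_beta' J\<close>)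
    also have "\<dots> = emeasure (M 0) ?E * emeasure ?S' ?F"
      using J by (intro S'.emeasure_pair_measure_Times) (auto intro!: sets_PiM_I finite_vimageI)
    also have "emeasure ?S' ?F = (\<Prod>j\<in>Suc -` J. emeasure (M (Suc j)) (E (Suc j)))"
      using J by (intro S'.emeasure_PiM_emb) (simp_all add: finite_vimageI)
    also have "\<dots> = (\<Prod>j\<in>J - {0}. emeasure (M j) (E j))"
      by (rule sym, rule prod.reindex_cong[of Suc]) (auto simp: image_iff gr0_conv_Suc)
    also have "emeasure (M 0) ?E * (\<Prod>j\<in>J - {0}. emeasure (M j) (E j)) = (\<Prod>j\<in>J. emeasure (M j) (E j))"
      by (auto simp: M.emeasure_space_1 prod.remove J)
    finally show "emeasure ?D ?X = (\<Prod>j\<in>J. emeasure (M j) (E j))" .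
  qed simp_all
qed

lemma measurable_walk_pos[measurable]:
  fixes q :: "nat \<Rightarrow> pt pmf"
  shows "(\<lambda>\<omega>. walk_pos \<omega> t) \<in> (\<Pi>\<^sub>M i\<in>UNIV. measure_pmf (q i)) \<rightarrow>\<^sub>M count_space UNIV"
proof (induction t)
  case 0
  then show ?case by simp
next
  case (Suc t)
  have "(\<lambda>\<omega>. \<omega> t) \<in> (\<Pi>\<^sub>M i\<in>UNIV. measure_pmf (q i)) \<rightarrow>\<^sub>M count_space UNIV"
    using measurable_component_singleton[of t UNIV "\<lambda>i. measure_pmf (q i)"]
    by (simp add: measurable_cong_sets sets_measure_pmf_count_space)
  then have "(\<lambda>\<omega>. padd a (\<omega> t)) \<in> (\<Pi>\<^sub>M i\<in>UNIV. measure_pmf (q i)) \<rightarrow>\<^sub>M count_space UNIV" for a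
    by (rule measurable_compose) simp
  then show ?case
    using measurable_compose_countable'[OF _ Suc, of "\<lambda>a \<omega>. padd a (\<omega> t)"] by simp
qed

lemma measurable_hit_time[measurable]:
  fixes q :: "nat \<Rightarrow> pt pmf"
  shows "hit_time h \<in> borel_measurable (\<Pi>\<^sub>M i\<in>UNIV. measure_pmf (q i))"
  unfolding hit_time_def by measurable

lemma walk_pos_case_nat_Suc: "walk_pos (case_nat s \<omega>) (Suc t) = padd s (walk_pos \<omega> t)"
  by (induction t) (auto simp: padd_def)

lemma hit_time_case_nat:
  assumes "h \<noteq> (0,0)"
  shows "hit_time h (case_nat s \<omega>) = 1 + hit_time (psub h s) \<omega>"
proof -
  have Suc_iff: "walk_pos (case_nat s \<omega>) (Suc t) = h \<longleftrightarrow> walk_pos \<omega> t = psub h s" for t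
    unfolding walk_pos_case_nat_Suc by (auto simp: padd_def psub_def prod_eq_iff)
  have ex_iff: "(\<exists>t. walk_pos (case_nat s \<omega>) t = h) \<longleftrightarrow> (\<exists>t. walk_pos \<omega> t = psub h s)"
    using assms Suc_iff by (metis not0_implies_Suc walk_pos.simps(1))
  show ?thesis
  proof (cases "\<exists>t. walk_pos \<omega> t = psub h s")
    case True
    then obtain t where "walk_pos (case_nat s \<omega>) (Suc t) = h"
      using Suc_iff by blast
    then have "(LEAST t. walk_pos (case_nat s \<omega>) t = h)
        = Suc (LEAST t. walk_pos (case_nat s \<omega>) (Suc t) = h)"
      by (rule Least_Suc) (use assms in simp)
    then show ?thesis
      using True ex_iff unfolding hit_time_def Suc_iff by (simp add: one_enat_def)
  next
    case False
    then show ?thesis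
      using ex_iff unfolding hit_time_def by simp
  qed
qed

lemma hit_time_origin: "hit_time (0,0) \<omega> = 0"
  unfolding hit_time_def by (auto intro!: Least_eq_0 exI[of _ 0])

lemma nn_integral_hit_time_first_step:
  fixes q :: "nat \<Rightarrow> pt pmf"
  assumes "h \<noteq> (0,0)"
  shows "pmf (q 0) u * (\<integral>\<^sup>+\<omega>. hit_time (psub h u) \<omega> \<partial>(\<Pi>\<^sub>M i\<in>UNIV. measure_pmf (q (Suc i))))
     \<le> (\<integral>\<^sup>+\<omega>. hit_time h \<omega> \<partial>(\<Pi>\<^sub>M i\<in>UNIV. measure_pmf (q i)))"
proof -
  let ?M0 = "measure_pmf (q 0)"
  let ?S = "\<Pi>\<^sub>M i\<in>UNIV. measure_pmf (q i)"
  let ?S' = "\<Pi>\<^sub>M i\<in>UNIV. measure_pmf (q (Suc i))"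
  let ?E' = "\<integral>\<^sup>+\<omega>. hit_time (psub h u) \<omega> \<partial>?S'"
  interpret S': prob_space ?S'
    by (intro prob_space_PiM prob_space_measure_pmf)
  have "(\<integral>\<^sup>+\<omega>. hit_time h \<omega> \<partial>?S)
      = (\<integral>\<^sup>+\<omega>. hit_time h \<omega> \<partial>distr (?M0 \<Otimes>\<^sub>M ?S') ?S (\<lambda>(s, \<omega>). case_nat s \<omega>))"
    using PiM_iter_general[of "\<lambda>i. measure_pmf (q i)"] by (simp add: prob_space_measure_pmf)
  also have "\<dots> = (\<integral>\<^sup>+(s, \<omega>). hit_time h (case_nat s \<omega>) \<partial>(?M0 \<Otimes>\<^sub>M ?S'))"
    by (simp add: nn_integral_distr measurable_case_nat_PiM split_beta')
  also have "\<dots> = (\<integral>\<^sup>+s. \<integral>\<^sup>+\<omega>. 1 + hit_time (psub h s) \<omega> \<partial>?S' \<partial>?M0)"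
    using assms by (subst S'.nn_integral_fst[symmetric]) (simp_all add: hit_time_case_nat split_beta')
  also have "\<dots> \<ge> (\<integral>\<^sup>+s. ?E' * indicator {u} s \<partial>?M0)"
    by (intro nn_integral_mono) (auto simp: indicator_def intro!: nn_integral_mono)
  also have "(\<integral>\<^sup>+s. ?E' * indicator {u} s \<partial>?M0) = ?E' * pmf (q 0) u"
    by (simp add: emeasure_pmf_single)
  finally show ?thesis
    by (simp add: mult.commute)
qed

lemma pmf_step_pmf_pos:
  assumes "0 < p" "p \<le> 1" "u \<in> dirs"
  shows "0 < pmf (step_pmf p d) u"
proof -
  have "True \<in> set_pmf (bernoulli_pmf p)" and "u \<in> set_pmf (pmf_of_set dirs)"
    using assms by (simp_all add: set_pmf_iff dirs_def)
  then have "u \<in> set_pmf (step_pmf p d)"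
    unfolding step_pmf_def by (auto simp: set_bind_pmf)
  then show ?thesis
    by (simp add: pmf_positive)
qed

definition finite_mean_hit :: "real \<Rightarrow> pt \<Rightarrow> bool" where
  "finite_mean_hit p h \<longleftrightarrow> (\<exists>x. instructions x \<and> expected_T p x h \<noteq> \<infinity>)"

lemma finite_mean_hit_step:
  assumes p: "0 < p" "p \<le> 1" and h: "h \<noteq> (0,0)" and u: "u \<in> dirs"
    and "finite_mean_hit p h"
  shows "finite_mean_hit p (psub h u)"
proof -
  obtain x where x: "instructions x" and finite: "expected_T p x h \<noteq> \<infinity>"
    using assms(5) unfolding finite_mean_hit_def by blast
  define q where "q t = step_pmf p (psub (x (Suc t)) (x t))" for t
  define x' where "x' t = psub (x (Suc t)) (x 1)" for t
  have x': "instructions x'"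
    using x unfolding instructions_def x'_def by (simp add: psub_def)
  have "pmf (q 0) u * expected_T p x' (psub h u) \<le> expected_T p x h"
    using nn_integral_hit_time_first_step[OF h, of q u]
    unfolding expected_T_def incr_space_def q_def x'_def by (simp add: psub_def)
  moreover have "0 < pmf (q 0) u"
    unfolding q_def by (rule pmf_step_pmf_pos[OF p u])
  ultimately have "expected_T p x' (psub h u) \<noteq> \<infinity>"
    using finite by (auto simp: ennreal_mult_eq_top_iff top_unique)
  with x' show ?thesis
    unfolding finite_mean_hit_def by blast
qed

lemma finite_mean_hit_along_line:
  fixes f :: "int \<Rightarrow> pt"
  assumes p: "0 < p" "p \<le> 1"
    and line: "\<And>i. f i \<noteq> (0,0) \<and> psub (f i) (f (i + 1)) \<in> dirs \<and> psub (f (i + 1)) (f i) \<in> dirs"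
    and "finite_mean_hit p (f k)"
  shows "finite_mean_hit p (f l)"
proof (induction l rule: int_induct[where k = k])
  case base
  show ?case by fact
next
  case (step1 i)
  have "finite_mean_hit p (psub (f i) (psub (f i) (f (i + 1))))"
    using finite_mean_hit_step[OF p _ _ step1(2)] line by blast
  then show ?case by (simp add: psub_def)
next
  case (step2 i)
  have "finite_mean_hit p (psub (f i) (psub (f (i - 1 + 1)) (f (i - 1))))"
    using finite_mean_hit_step[OF p _ _ step2(2)] line by blast
  then show ?case by (simp add: psub_def)
qed

lemma finite_mean_hit_iff_one_one:
  assumes p: "0 < p" "p \<le> 1" and "z \<noteq> (0,0)"
  shows "finite_mean_hit p z \<longleftrightarrow> finite_mean_hit p (1,1)"
proof -
  have vertical: "finite_mean_hit p (a, b) \<longleftrightarrow> finite_mean_hit p (a, b')" if "a \<noteq> 0" for a b b'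
    using finite_mean_hit_along_line[OF p, of "\<lambda>c. (a, c)"] that
    by (auto simp: psub_def dirs_def)
  have horizontal: "finite_mean_hit p (a, b) \<longleftrightarrow> finite_mean_hit p (a', b)" if "b \<noteq> 0" for a a' b
    using finite_mean_hit_along_line[OF p, of "\<lambda>c. (c, b)"] that
    by (auto simp: psub_def dirs_def)
  obtain a b where z: "z = (a, b)" by fastforce
  show ?thesis
  proof (cases "a = 0")
    case True
    with assms(3) z have "b \<noteq> 0" by simp
    then show ?thesis
      using z horizontal[of b a 1] vertical[of 1 b 1] by simp
  next
    case False
    then show ?thesis
      using z vertical[of a b 1] horizontal[of 1 a 1] by simp
  qed
qed

theorem lemma1:
  fixes p :: real
  assumes "0 < p" and "p \<le> 1"
    and "\<exists>h0 :: pt. \<forall>x. instructions x \<longrightarrow> expected_T p x h0 = \<infinity>"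
  shows "\<forall>h :: pt. h \<noteq> (0,0) \<longrightarrow> (\<forall>x. instructions x \<longrightarrow> expected_T p x h = \<infinity>)"
proof -
  obtain h0 where h0: "\<not> finite_mean_hit p h0"
    using assms(3) unfolding finite_mean_hit_def by blast
  have "instructions (\<lambda>t. (int t, 0))"
    by (simp add: instructions_def psub_def dirs_def)
  then have "finite_mean_hit p (0,0)"
    unfolding finite_mean_hit_def expected_T_def by (auto simp: hit_time_origin[abs_def])
  with h0 have "h0 \<noteq> (0,0)" by auto
  then have "\<not> finite_mean_hit p h" if "h \<noteq> (0,0)" for h
    using h0 that finite_mean_hit_iff_one_one[OF assms(1,2)] by blast
  then show ?thesis
    unfolding finite_mean_hit_def by blast
qed

end
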